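(* Let $G$ be a non-chordal graph, $H$ a hole of $G$, and $S$ the equivalence class of $\sim_G$ containing $V(H)$. Let $u,v$ be two nonadjacent vertices of $H$. If $G+uv$ has a hole $H^*$ that is not a hole of $G$, then $V(H^* )\subseteq S$.
   Context: All graphs are finite and simple. A hole of $G$ is an induced cycle of length at least $4$; $G$ is chordal if it has no hole. $\mathcal H(G)$ is the set of holes of $G$ and $\Omega(G)=\bigcup_{H\in\mathcal H(G)}V(H)$. The relation $\sim_G$ on $\Omega(G)$ is defined by $x\sim_G y$ iff $x,y$ lie on a common hole, or there is a sequence $H_1,\dots,H_t$ of distinct holes of $G$ with $x\in V(H_1)$, $y\in V(H_t)$ and $H_i,H_{i+1}$ sharing a vertex for each $i$; it is an equivalence relation and the vertex set of each hole lies in a single class. *)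

theory Defs
  imports Main
begin

definition graph :: "'a set \<Rightarrow> ('a \<Rightarrow> 'a \<Rightarrow> bool) \<Rightarrow> bool" where
  "graph V E \<longleftrightarrow> finite V \<and> (\<forall>x y. E x y \<longrightarrow> x \<in> V \<and> y \<in> V)
     \<and> (\<forall>x y. E x y \<longrightarrow> E y x) \<and> (\<forall>x. \<not> E x x)"

text \<open>A hole (induced cycle of length at least 4), represented by its vertex set
(an induced subgraph is determined by its vertex set): C is a hole iff its
vertices can be listed cyclically as xs (distinct, length at least 4) such that
two vertices of C are adjacent exactly when they are cyclically consecutive.\<close>
definition is_hole :: "'a set \<Rightarrow> ('a \<Rightarrow> 'a \<Rightarrow> bool) \<Rightarrow> 'a set \<Rightarrow> bool" where
  "is_hole V E C \<longleftrightarrow> C \<subseteq> V \<and> (\<exists>xs. distinct xs \<and> set xs = C \<and> length xs \<ge> 4 \<and>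
     (\<forall>i<length xs. \<forall>j<length xs.
        E (xs ! i) (xs ! j) \<longleftrightarrow> (j = Suc i mod length xs \<or> i = Suc j mod length xs)))"

definition holes :: "'a set \<Rightarrow> ('a \<Rightarrow> 'a \<Rightarrow> bool) \<Rightarrow> 'a set set" where
  "holes V E = {C. is_hole V E C}"

definition chordal :: "'a set \<Rightarrow> ('a \<Rightarrow> 'a \<Rightarrow> bool) \<Rightarrow> bool" where
  "chordal V E \<longleftrightarrow> holes V E = {}"

definition Omega :: "'a set \<Rightarrow> ('a \<Rightarrow> 'a \<Rightarrow> bool) \<Rightarrow> 'a set" where
  "Omega V E = \<Union> (holes V E)"

text \<open>x ~_G y: x,y lie on a common hole (list of length 1), or there is a sequence
of distinct holes H_1..H_t with x in H_1, y in H_t and consecutive holes sharing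
a vertex.\<close>
definition hole_rel :: "'a set \<Rightarrow> ('a \<Rightarrow> 'a \<Rightarrow> bool) \<Rightarrow> 'a \<Rightarrow> 'a \<Rightarrow> bool" where
  "hole_rel V E x y \<longleftrightarrow> (\<exists>Hs. Hs \<noteq> [] \<and> distinct Hs \<and> set Hs \<subseteq> holes V E \<and>
     x \<in> hd Hs \<and> y \<in> last Hs \<and>
     (\<forall>i. Suc i < length Hs \<longrightarrow> Hs ! i \<inter> Hs ! Suc i \<noteq> {}))"

definition hole_class :: "'a set \<Rightarrow> ('a \<Rightarrow> 'a \<Rightarrow> bool) \<Rightarrow> 'a set \<Rightarrow> 'a set" where
  "hole_class V E H = {y. \<exists>x\<in>H. hole_rel V E x y}"

definition add_edge :: "('a \<Rightarrow> 'a \<Rightarrow> bool) \<Rightarrow> 'a \<Rightarrow> 'a \<Rightarrow> 'a \<Rightarrow> 'a \<Rightarrow> bool" where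
  "add_edge E u v = (\<lambda>x y. E x y \<or> (x = u \<and> y = v) \<or> (x = v \<and> y = u))"

end

theory Submission
  imports Defs
begin

text \<open>
  Deleting the new edge uv from the new hole H* leaves an induced path P of G from u to v with
  at least four vertices; we show that every vertex x of P outside H lies on a hole of G that
  meets H.  If the neighbours of x on H contain two nonadjacent vertices and miss some vertex c,
  then x together with the arc of H through c between its extreme neighbours contains such a hole.
  Otherwise the neighbours of x on H form a clique, so one of the two arcs of H between u and v
  avoids them internally; replacing x on P by this arc and closing up through x yields a hole, and
  it meets H because an induced path contains no hole.
\<close>

section \<open>Induced cycles and induced paths\<close>

lemma graph_sym: "graph V E \<Longrightarrow> E x y \<Longrightarrow> E y x"
  unfolding graph_def by blast

lemma graph_irrefl: "graph V E \<Longrightarrow> \<not> E x x"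
  unfolding graph_def by blast

definition cyclic_adj :: "nat \<Rightarrow> nat \<Rightarrow> nat \<Rightarrow> bool" where
  "cyclic_adj n i j \<longleftrightarrow> j = Suc i mod n \<or> i = Suc j mod n"

lemma cyclic_adj_iff:
  assumes "i < n" "j < n"
  shows "cyclic_adj n i j \<longleftrightarrow> j = Suc i \<or> i = Suc j \<or> {i, j} = {0, n - 1}"
  using assms unfolding cyclic_adj_def by (auto simp: mod_Suc doubleton_eq_iff)

lemma cyclic_adj_rotate:
  assumes "i < n" "j < n"
  shows "cyclic_adj n ((k + i) mod n) ((k + j) mod n) \<longleftrightarrow> cyclic_adj n i j"
proof -
  have "(k + b) mod n = Suc ((k + a) mod n) mod n \<longleftrightarrow> b = Suc a mod n"
    if "b < n" for a b
  proof -
    have "(k + b) mod n = Suc ((k + a) mod n) mod n \<longleftrightarrow> (k + b) mod n = (k + Suc a) mod n"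
      by (simp add: mod_Suc_eq)
    also have "\<dots> \<longleftrightarrow> b mod n = Suc a mod n"
      by (simp add: nat_mod_eq_iff)
    finally show ?thesis using that by simp
  qed
  then show ?thesis unfolding cyclic_adj_def using assms by blast
qed

definition induced_cycle :: "('a \<Rightarrow> 'a \<Rightarrow> bool) \<Rightarrow> 'a list \<Rightarrow> bool" where
  "induced_cycle E xs \<longleftrightarrow> distinct xs \<and> 4 \<le> length xs \<and>
     (\<forall>i<length xs. \<forall>j<length xs. E (xs ! i) (xs ! j) \<longleftrightarrow> cyclic_adj (length xs) i j)"

definition induced_path :: "('a \<Rightarrow> 'a \<Rightarrow> bool) \<Rightarrow> 'a list \<Rightarrow> bool" where
  "induced_path E ys \<longleftrightarrow> distinct ys \<and>
     (\<forall>i<length ys. \<forall>j<length ys. E (ys ! i) (ys ! j) \<longleftrightarrow> j = Suc i \<or> i = Suc j)"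

lemma is_hole_iff_induced_cycle:
  "is_hole V E C \<longleftrightarrow> C \<subseteq> V \<and> (\<exists>xs. induced_cycle E xs \<and> set xs = C)"
  unfolding is_hole_def induced_cycle_def cyclic_adj_def by auto

lemma induced_cycle_adj:
  "induced_cycle E xs \<Longrightarrow> i < length xs \<Longrightarrow> j < length xs \<Longrightarrow>
    E (xs ! i) (xs ! j) \<longleftrightarrow> cyclic_adj (length xs) i j"
  unfolding induced_cycle_def by blast

lemma induced_cycle_edge:
  assumes "induced_cycle E xs" "Suc j < length xs"
  shows "E (xs ! j) (xs ! Suc j)"
  using induced_cycle_adj[OF assms(1)] cyclic_adj_iff assms(2) by simp

lemma induced_cycle_closing_edge:
  assumes "induced_cycle E xs"
  shows "E (xs ! (length xs - 1)) (xs ! 0)"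
proof -
  have "4 \<le> length xs" using assms unfolding induced_cycle_def by blast
  then have "Suc (length xs - 1) = length xs" by simp
  then have "cyclic_adj (length xs) (length xs - 1) 0"
    unfolding cyclic_adj_def by simp
  moreover have "length xs - 1 < length xs" "0 < length xs" using \<open>4 \<le> length xs\<close> by auto
  ultimately show ?thesis using induced_cycle_adj[OF assms] by blast
qed

lemma induced_cycle_rotate:
  assumes cyc: "induced_cycle E xs"
  shows "induced_cycle E (rotate k xs)"
proof -
  let ?n = "length xs"
  have "E (rotate k xs ! i) (rotate k xs ! j) \<longleftrightarrow> cyclic_adj ?n i j" if "i < ?n" "j < ?n" for i j
  proof -
    have "rotate k xs ! i = xs ! ((k + i) mod ?n)" "rotate k xs ! j = xs ! ((k + j) mod ?n)"
      using that by (simp_all add: nth_rotate)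
    moreover have "0 < ?n" using that by linarith
    then have "(k + i) mod ?n < ?n" "(k + j) mod ?n < ?n" by simp_all
    ultimately show ?thesis using induced_cycle_adj[OF cyc] cyclic_adj_rotate[OF that] by simp
  qed
  then show ?thesis using cyc unfolding induced_cycle_def by simp
qed

lemma hd_last_rotate_Suc:
  assumes "s < length xs"
  shows "hd (rotate (Suc s) xs) = xs ! (Suc s mod length xs)" "last (rotate (Suc s) xs) = xs ! s"
proof -
  have "xs \<noteq> []" using assms by auto
  have "rotate (Suc s) xs ! 0 = xs ! ((Suc s + 0) mod length xs)"
    using assms by (intro nth_rotate) auto
  then show "hd (rotate (Suc s) xs) = xs ! (Suc s mod length xs)"
    using \<open>xs \<noteq> []\<close> by (simp add: hd_conv_nth del: rotate_Suc)
  have "rotate (Suc s) xs ! (length xs - 1) = xs ! ((Suc s + (length xs - 1)) mod length xs)"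
    using assms by (intro nth_rotate) auto
  moreover have "Suc s + (length xs - 1) = s + length xs" using assms by simp
  then have "(Suc s + (length xs - 1)) mod length xs = s" using assms by simp
  ultimately show "last (rotate (Suc s) xs) = xs ! s"
    using \<open>xs \<noteq> []\<close> by (simp add: last_conv_nth del: rotate_Suc)
qed

lemma induced_cycle_rotate_to:
  assumes "induced_cycle E xs" "c \<in> set xs"
  obtains ys where "induced_cycle E ys" "set ys = set xs" "length ys = length xs" "ys ! 0 = c"
proof -
  obtain k where k: "k < length xs" "xs ! k = c" using assms(2) by (meson in_set_conv_nth)
  have "rotate k xs ! 0 = xs ! ((k + 0) mod length xs)"
    using k by (intro nth_rotate) auto
  with k have "rotate k xs ! 0 = c" by simp
  with that[OF induced_cycle_rotate[OF assms(1)]] show ?thesis by simp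
qed

lemma induced_cycle_cong:
  "(\<And>a b. a \<in> set xs \<Longrightarrow> b \<in> set xs \<Longrightarrow> E a b = F a b) \<Longrightarrow>
    induced_cycle E xs = induced_cycle F xs"
  unfolding induced_cycle_def by (auto simp: nth_mem)

lemma induced_path_adj:
  "induced_path E ys \<Longrightarrow> i < length ys \<Longrightarrow> j < length ys \<Longrightarrow>
    E (ys ! i) (ys ! j) \<longleftrightarrow> j = Suc i \<or> i = Suc j"
  unfolding induced_path_def by blast

lemma induced_path_edge: "induced_path E ys \<Longrightarrow> Suc j < length ys \<Longrightarrow> E (ys ! j) (ys ! Suc j)"
  using induced_path_adj by fastforce

lemma induced_path_take: "induced_path E ys \<Longrightarrow> induced_path E (take m ys)"
  unfolding induced_path_def by auto

lemma induced_path_snoc: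
  assumes path: "induced_path E ys" and "z \<notin> set ys" "\<not> E z z"
    and sym: "\<And>a b. E a b \<Longrightarrow> E b a"
    and z_adj: "\<And>j. j < length ys \<Longrightarrow> E (ys ! j) z \<longleftrightarrow> Suc j = length ys"
  shows "induced_path E (ys @ [z])"
proof -
  let ?n = "length ys"
  have "E ((ys @ [z]) ! i) ((ys @ [z]) ! j) \<longleftrightarrow> j = Suc i \<or> i = Suc j"
    if "i < Suc ?n" "j < Suc ?n" for i j
  proof (cases "i < ?n")
    case i: True
    show ?thesis
    proof (cases "j < ?n")
      case True
      with i show ?thesis using induced_path_adj[OF path] by (simp add: nth_append)
    next
      case False
      with that i show ?thesis using z_adj[of i] by (auto simp: nth_append)
    qed
  next
    case i: False
    show ?thesis
    proof (cases "j < ?n")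
      case True
      with that i show ?thesis using z_adj[of j] sym by (auto simp: nth_append)
    next
      case False
      with that i show ?thesis using \<open>\<not> E z z\<close> by (auto simp: nth_append)
    qed
  qed
  then show ?thesis
    using assms(1,2) unfolding induced_path_def by auto
qed

lemma induced_path_extend:
  assumes irr: "\<And>a. \<not> E a a" and sym: "\<And>a b. E a b \<Longrightarrow> E b a"
    and ys: "induced_path E ys" "ys \<noteq> []" and "E (last ys) z"
  obtains zs where "induced_path E zs" "zs \<noteq> []" "hd zs = hd ys" "last zs = z"
    "set zs \<subseteq> insert z (set ys)"
proof -
  have prefix: "take (Suc t) ys \<noteq> [] \<and> hd (take (Suc t) ys) = hd ys \<and> last (take (Suc t) ys) = ys ! t
      \<and> set (take (Suc t) ys) \<subseteq> set ys" if "t < length ys" for t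
  proof -
    have "last (take (Suc t) ys) = ys ! t" using that by (simp add: take_Suc_conv_app_nth)
    then show ?thesis using ys(2) set_take_subset[of "Suc t" ys] by (auto simp: hd_take)
  qed
  show ?thesis
  proof (cases "z \<in> set ys")
    case True
    then obtain t where "t < length ys" "ys ! t = z" by (meson in_set_conv_nth)
    then show ?thesis
      using that[of "take (Suc t) ys"] prefix[of t] induced_path_take[OF ys(1), of "Suc t"] by auto
  next
    case False
    \<comment> \<open>cut the path at the first neighbour of z\<close>
    define j where "j = (LEAST j. j < length ys \<and> E (ys ! j) z)"
    have "length ys - 1 < length ys \<and> E (ys ! (length ys - 1)) z"
      using ys(2) \<open>E (last ys) z\<close> by (simp add: last_conv_nth)
    then have j: "j < length ys \<and> E (ys ! j) z"
      unfolding j_def by (rule LeastI)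
    have before_j: "\<not> E (ys ! t) z" if "t < j" for t
      using not_less_Least[OF that[unfolded j_def]] j that by (simp add: j_def)
    have "induced_path E (take (Suc j) ys @ [z])"
    proof (rule induced_path_snoc[OF induced_path_take[OF ys(1)] _ irr sym])
      show "z \<notin> set (take (Suc j) ys)" using False in_set_takeD by fast
      show "E (take (Suc j) ys ! t) z \<longleftrightarrow> Suc t = length (take (Suc j) ys)"
        if "t < length (take (Suc j) ys)" for t
        using that j before_j[of t] by (cases "t = j") auto
    qed
    then show ?thesis using that[of "take (Suc j) ys @ [z]"] prefix[of j] j by auto
  qed
qed

lemma induced_path_contains_no_hole:
  assumes path: "induced_path E ps" and hole: "is_hole V E C"
  shows "\<not> C \<subseteq> set ps"
proof
  assume C_ps: "C \<subseteq> set ps"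
  obtain xs where xs: "induced_cycle E xs" "set xs = C"
    using hole unfolding is_hole_iff_induced_cycle by blast
  have "C \<noteq> {}" using xs unfolding induced_cycle_def by auto
  then have "\<exists>t. t < length ps \<and> ps ! t \<in> C" using C_ps by (metis all_not_in_conv in_set_conv_nth subsetD)
  define t where "t = (LEAST t. t < length ps \<and> ps ! t \<in> C)"
  have t: "t < length ps" "ps ! t \<in> C"
    using LeastI_ex[OF \<open>\<exists>t. _\<close>] unfolding t_def by blast+
  \<comment> \<open>the first vertex of C along the path has only one neighbour in C\<close>
  have unique_nb: "b = ps ! Suc t" if b: "b \<in> C" and adj: "E (ps ! t) b \<or> E b (ps ! t)" for b
  proof -
    obtain s where s: "s < length ps" "ps ! s = b" using b C_ps by (meson in_set_conv_nth subsetD)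
    have "\<not> s < t" using not_less_Least[of s] s b unfolding t_def by blast
    then show ?thesis using adj s t(1) induced_path_adj[OF path] by fastforce
  qed
  obtain ys where ys: "induced_cycle E ys" "set ys = C" "length ys = length xs" "ys ! 0 = ps ! t"
    using induced_cycle_rotate_to[OF xs(1)] t(2) xs(2) by blast
  have n: "4 \<le> length ys" using ys(1) unfolding induced_cycle_def by blast
  have "1 < length ys" "length ys - 1 < length ys" using n by auto
  then have "ys ! 1 \<in> C" "ys ! (length ys - 1) \<in> C" using ys(2) nth_mem by blast+
  moreover have "E (ps ! t) (ys ! 1)" "E (ys ! (length ys - 1)) (ps ! t)"
    using induced_cycle_edge[OF ys(1), of 0] induced_cycle_closing_edge[OF ys(1)]
      \<open>1 < length ys\<close> ys(4) by simp_all
  ultimately have "ys ! 1 = ps ! Suc t" "ys ! (length ys - 1) = ps ! Suc t"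
    using unique_nb by blast+
  moreover have "ys ! 1 \<noteq> ys ! (length ys - 1)"
    using ys(1) n unfolding induced_cycle_def by (simp add: nth_eq_iff_index_eq)
  ultimately show False by simp
qed

lemma induced_cycle_Cons_apex:
  assumes path: "induced_path E ys" and len: "3 \<le> length ys" and "\<not> E x x"
    and sym: "\<And>a b. E a b \<Longrightarrow> E b a" and "x \<notin> set ys"
    and x_adj: "\<And>j. j < length ys \<Longrightarrow> E x (ys ! j) \<longleftrightarrow> j = 0 \<or> j = length ys - 1"
  shows "induced_cycle E (x # ys)"
proof -
  let ?n = "length ys"
  have "E ((x # ys) ! i) ((x # ys) ! j) \<longleftrightarrow> cyclic_adj (Suc ?n) i j"
    if "i < Suc ?n" "j < Suc ?n" for i j
  proof (cases i; cases j)
    fix i' j' assume "i = Suc i'" "j = Suc j'"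
    then show ?thesis
      using that induced_path_adj[OF path, of i' j'] by (simp add: cyclic_adj_iff doubleton_eq_iff)
  next
    fix j' assume "i = 0" "j = Suc j'"
    then show ?thesis
      using that len x_adj[of j'] by (auto simp: cyclic_adj_iff doubleton_eq_iff)
  next
    fix i' assume "i = Suc i'" "j = 0"
    then show ?thesis
      using that len x_adj[of i'] sym by (auto simp: cyclic_adj_iff doubleton_eq_iff)
  qed (use that len \<open>\<not> E x x\<close> in \<open>auto simp: cyclic_adj_iff\<close>)
  then show ?thesis
    using path len \<open>x \<notin> set ys\<close> unfolding induced_cycle_def induced_path_def by simp
qed

lemma induced_path_of_cycle_minus_closing_edge:
  assumes cyc: "induced_cycle F ps" and E_F: "\<And>a b. E a b \<longleftrightarrow> F a b \<and> {a, b} \<noteq> {hd ps, last ps}"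
  shows "induced_path E ps"
proof -
  let ?n = "length ps"
  have n: "4 \<le> ?n" and dist: "distinct ps" using cyc unfolding induced_cycle_def by auto
  then have "ps \<noteq> []" by auto
  then have ends: "hd ps = ps ! 0" "last ps = ps ! (?n - 1)" by (simp_all add: hd_conv_nth last_conv_nth)
  have "E (ps ! i) (ps ! j) \<longleftrightarrow> j = Suc i \<or> i = Suc j" if "i < ?n" "j < ?n" for i j
  proof -
    have "inj_on (nth ps) {..<?n}" using dist by (simp add: inj_on_def nth_eq_iff_index_eq)
    then have "nth ps ` {i, j} = nth ps ` {0, ?n - 1} \<longleftrightarrow> {i, j} = {0, ?n - 1}"
      using that n by (intro inj_on_image_eq_iff) auto
    then have "{ps ! i, ps ! j} = {hd ps, last ps} \<longleftrightarrow> {i, j} = {0, ?n - 1}"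
      using ends by simp
    then have "E (ps ! i) (ps ! j) \<longleftrightarrow> cyclic_adj ?n i j \<and> {i, j} \<noteq> {0, ?n - 1}"
      using E_F[of "ps ! i" "ps ! j"] induced_cycle_adj[OF cyc that] by simp
    moreover have "{i, j} \<noteq> {0, ?n - 1}" if "j = Suc i \<or> i = Suc j"
      using that n by (auto simp: doubleton_eq_iff)
    ultimately show ?thesis using cyclic_adj_iff[OF that] by argo
  qed
  with dist show ?thesis unfolding induced_path_def by blast
qed

section \<open>Connectivity inside a vertex set\<close>

definition induced_edge :: "'a set \<Rightarrow> ('a \<Rightarrow> 'a \<Rightarrow> bool) \<Rightarrow> 'a \<Rightarrow> 'a \<Rightarrow> bool" where
  "induced_edge W E a b \<longleftrightarrow> E a b \<and> a \<in> W \<and> b \<in> W"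

lemma reachable_along_chain:
  assumes "a \<le> b"
    and "\<And>j. a \<le> j \<Longrightarrow> j < b \<Longrightarrow> E (xs ! j) (xs ! Suc j)"
    and "\<And>j. a \<le> j \<Longrightarrow> j \<le> b \<Longrightarrow> xs ! j \<in> W"
  shows "(induced_edge W E)\<^sup>*\<^sup>* (xs ! a) (xs ! b)"
  using assms
proof (induction b)
  case (Suc b)
  show ?case
  proof (cases "a = Suc b")
    case False
    then have "(induced_edge W E)\<^sup>*\<^sup>* (xs ! a) (xs ! b)" using Suc by simp
    moreover have "induced_edge W E (xs ! b) (xs ! Suc b)"
      using Suc.prems False unfolding induced_edge_def by simp
    ultimately show ?thesis by (rule rtranclp.rtrancl_into_rtrancl)
  qed simp
qed simp

lemma reachable_sym:
  assumes "\<And>a b. E a b \<Longrightarrow> E b a" and "(induced_edge W E)\<^sup>*\<^sup>* a b"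
  shows "(induced_edge W E)\<^sup>*\<^sup>* b a"
proof -
  have "symp (induced_edge W E)"
    using assms(1) unfolding induced_edge_def symp_def by blast
  with assms(2) show ?thesis by (blast dest: sympD[OF symp_rtranclp])
qed

lemma reachable_mono:
  "(induced_edge W E)\<^sup>*\<^sup>* a b \<Longrightarrow> W \<subseteq> W' \<Longrightarrow> (induced_edge W' E)\<^sup>*\<^sup>* a b"
  by (erule rtranclp_mono[THEN predicate2D, rotated]) (auto simp: induced_edge_def)

lemma reachable_induced_path:
  assumes irr: "\<And>a. \<not> E a a" and sym: "\<And>a b. E a b \<Longrightarrow> E b a"
    and "(induced_edge W E)\<^sup>*\<^sup>* p q" "p \<in> W"
  obtains ys where "induced_path E ys" "ys \<noteq> []" "hd ys = p" "last ys = q" "set ys \<subseteq> W"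
proof -
  have "\<exists>ys. induced_path E ys \<and> ys \<noteq> [] \<and> hd ys = p \<and> last ys = q \<and> set ys \<subseteq> W"
    using assms(3)
  proof (induction rule: rtranclp_induct)
    case base
    then show ?case using irr \<open>p \<in> W\<close>
      by (intro exI[of _ "[p]"]) (simp add: induced_path_def)
  next
    case (step y z)
    then obtain ys where ys: "induced_path E ys" "ys \<noteq> []" "hd ys = p" "last ys = y" "set ys \<subseteq> W"
      by blast
    have "E (last ys) z" "z \<in> W" using step.hyps(2) ys(4) unfolding induced_edge_def by auto
    then obtain zs where "induced_path E zs" "zs \<noteq> []" "hd zs = hd ys" "last zs = z"
        "set zs \<subseteq> insert z (set ys)"
      using induced_path_extend[OF irr sym ys(1,2)] by blast
    then show ?case using ys(3,5) \<open>z \<in> W\<close> by (intro exI[of _ zs]) auto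
  qed
  with that show ?thesis by blast
qed

lemma outer_arc_reachable:
  assumes cyc: "induced_cycle E hs" and "a \<le> b" "b < length hs"
  shows "(induced_edge {hs ! j | j. j < length hs \<and> (j \<le> a \<or> b \<le> j)} E)\<^sup>*\<^sup>* (hs ! b) (hs ! a)"
    (is "(induced_edge ?W E)\<^sup>*\<^sup>* _ _")
proof -
  let ?n = "length hs"
  have "(induced_edge ?W E)\<^sup>*\<^sup>* (hs ! b) (hs ! (?n - 1))"
    by (rule reachable_along_chain) (use assms induced_cycle_edge[OF cyc] in auto)
  moreover have "hs ! (?n - 1) \<in> ?W" using assms(3) by (auto intro!: exI[of _ "?n - 1"])
  moreover have "hs ! 0 \<in> ?W" using assms(3) by (auto intro!: exI[of _ 0])
  ultimately have "(induced_edge ?W E)\<^sup>*\<^sup>* (hs ! b) (hs ! 0)"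
    using induced_cycle_closing_edge[OF cyc] unfolding induced_edge_def
    by (simp add: rtranclp.rtrancl_into_rtrancl)
  moreover have "(induced_edge ?W E)\<^sup>*\<^sup>* (hs ! 0) (hs ! a)"
    by (rule reachable_along_chain) (use assms induced_cycle_edge[OF cyc] in auto)
  ultimately show ?thesis by (rule rtranclp_trans)
qed

lemma induced_path_bypass_reachable:
  assumes sym: "\<And>a b. E a b \<Longrightarrow> E b a" and path: "induced_path E ps"
    and i: "0 < i" "Suc i < length ps" and A: "(induced_edge A E)\<^sup>*\<^sup>* (hd ps) (last ps)"
  shows "(induced_edge ((set ps - {ps ! i}) \<union> A) E)\<^sup>*\<^sup>* (ps ! (i - 1)) (ps ! Suc i)"
    (is "(induced_edge ?W E)\<^sup>*\<^sup>* _ _")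
proof -
  have dist: "distinct ps" using path unfolding induced_path_def by blast
  let ?k = "length ps - 1"
  have "ps \<noteq> []" using i(2) by auto
  then have ends: "hd ps = ps ! 0" "last ps = ps ! ?k" by (simp_all add: hd_conv_nth last_conv_nth)
  have segment: "(induced_edge ?W E)\<^sup>*\<^sup>* (ps ! a) (ps ! b)"
    if "a \<le> b" "b < length ps" "b < i \<or> i < a" for a b
    by (rule reachable_along_chain)
      (use that i induced_path_edge[OF path] nth_eq_iff_index_eq[OF dist] in auto)
  have "(induced_edge ?W E)\<^sup>*\<^sup>* (ps ! (i - 1)) (hd ps)"
    using reachable_sym[OF sym segment[of 0 "i - 1"]] i ends by simp
  moreover have "(induced_edge ?W E)\<^sup>*\<^sup>* (hd ps) (last ps)"
    using reachable_mono[OF A] by blast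
  moreover have "(induced_edge ?W E)\<^sup>*\<^sup>* (last ps) (ps ! Suc i)"
    using reachable_sym[OF sym segment[of "Suc i" ?k]] i ends by simp
  ultimately show ?thesis by (meson rtranclp_trans)
qed

lemma induced_cycle_arc_avoiding_clique:
  assumes cyc: "induced_cycle E hs" and sym: "\<And>a b. E a b \<Longrightarrow> E b a"
    and "a \<in> set hs" "b \<in> set hs"
    and clique: "\<And>y z. y \<in> N \<Longrightarrow> z \<in> N \<Longrightarrow> y \<noteq> z \<Longrightarrow> E y z"
  obtains A where "A \<subseteq> set hs" "(induced_edge A E)\<^sup>*\<^sup>* a b" "A \<inter> N \<subseteq> {a, b}"
proof -
  obtain hs' where hs': "induced_cycle E hs'" "set hs' = set hs" "hs' ! 0 = a"
    using induced_cycle_rotate_to[OF cyc \<open>a \<in> set hs\<close>] by blast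
  let ?n = "length hs'"
  have "b \<in> set hs'" using \<open>b \<in> set hs\<close> hs'(2) by simp
  then obtain m where m: "m < ?n" "hs' ! m = b" by (auto simp: in_set_conv_nth)
  define inner where "inner = {hs' ! j | j. j \<le> m}"
  define outer where "outer = {hs' ! j | j. j < ?n \<and> (j \<le> 0 \<or> m \<le> j)}"
  have "inner \<subseteq> set hs" "outer \<subseteq> set hs"
    unfolding inner_def outer_def hs'(2)[symmetric] using m(1) by (auto intro!: nth_mem)
  have "(induced_edge inner E)\<^sup>*\<^sup>* a b"
    unfolding inner_def hs'(3)[symmetric] m(2)[symmetric]
    by (rule reachable_along_chain) (use m induced_cycle_edge[OF hs'(1)] in auto)
  moreover have "(induced_edge outer E)\<^sup>*\<^sup>* a b"
    using reachable_sym[OF sym outer_arc_reachable[OF hs'(1) _ m(1), of 0]] hs'(3) m(2)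
    unfolding outer_def by simp
  \<comment> \<open>two vertices of N interior to different arcs would be adjacent across b\<close>
  moreover have "inner \<inter> N \<subseteq> {a, b} \<or> outer \<inter> N \<subseteq> {a, b}"
  proof (rule ccontr)
    assume "\<not> ?thesis"
    then obtain j1 j2 where j1: "j1 \<le> m" "hs' ! j1 \<in> N" "hs' ! j1 \<notin> {a, b}"
      and j2: "j2 < ?n" "m \<le> j2" "hs' ! j2 \<in> N" "hs' ! j2 \<notin> {a, b}"
      unfolding inner_def outer_def using hs'(3) by blast
    then have "j1 < m" "m < j2" using m(2) by (auto simp: le_less)
    have "0 < j1" using j1(3) hs'(3) by (auto intro: gr0I)
    have "hs' ! j1 \<noteq> hs' ! j2"
      using hs'(1) j2(1) \<open>j1 < m\<close> \<open>m < j2\<close> m(1) unfolding induced_cycle_def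
      by (simp add: nth_eq_iff_index_eq)
    then have "E (hs' ! j1) (hs' ! j2)" using clique j1(2) j2(3) by blast
    then have "cyclic_adj ?n j1 j2" using induced_cycle_adj[OF hs'(1)] j2(1) \<open>j1 < m\<close> m(1) by simp
    then show False
      using \<open>0 < j1\<close> \<open>j1 < m\<close> \<open>m < j2\<close> j2(1) m(1) by (auto simp: cyclic_adj_iff doubleton_eq_iff)
  qed
  ultimately show ?thesis
    using that \<open>inner \<subseteq> set hs\<close> \<open>outer \<subseteq> set hs\<close> by blast
qed

section \<open>Holes through a vertex outside a hole\<close>

lemma hole_through_apex:
  assumes G: "graph V E" and "W \<subseteq> V" "x \<in> V" "x \<notin> W"
    and "p \<in> W" "p \<noteq> q" "\<not> E p q" "E x p" "E x q"
    and only_pq: "\<And>w. w \<in> W \<Longrightarrow> E x w \<Longrightarrow> w = p \<or> w = q"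
    and "(induced_edge W E)\<^sup>*\<^sup>* p q"
  obtains C where "is_hole V E C" "x \<in> C" "p \<in> C" "C \<subseteq> insert x W"
proof -
  obtain ys where ys: "induced_path E ys" "ys \<noteq> []" "hd ys = p" "last ys = q" "set ys \<subseteq> W"
    using reachable_induced_path[OF graph_irrefl[OF G] graph_sym[OF G] assms(11,5)] by blast
  let ?n = "length ys"
  have ends: "ys ! 0 = p" "ys ! (?n - 1) = q" using ys(2-4) by (simp_all add: hd_conv_nth last_conv_nth)
  have "?n - 1 \<noteq> 0" "?n - 1 \<noteq> Suc 0"
    using ends \<open>p \<noteq> q\<close> \<open>\<not> E p q\<close> induced_path_adj[OF ys(1), of 0 "?n - 1"] ys(2) by auto
  then have len: "3 \<le> ?n" by linarith
  have "E x (ys ! j) \<longleftrightarrow> j = 0 \<or> j = ?n - 1" if "j < ?n" for j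
  proof
    assume "E x (ys ! j)"
    then have "ys ! j = ys ! 0 \<or> ys ! j = ys ! (?n - 1)"
      using only_pq[of "ys ! j"] ys(5) that ends by (simp add: nth_mem subset_iff)
    moreover have "distinct ys" using ys(1) unfolding induced_path_def by blast
    ultimately show "j = 0 \<or> j = ?n - 1"
      using nth_eq_iff_index_eq[of ys j 0] nth_eq_iff_index_eq[of ys j "?n - 1"] that len ys(2)
      by auto
  qed (use ends \<open>E x p\<close> \<open>E x q\<close> in auto)
  then have "induced_cycle E (x # ys)"
    using induced_cycle_Cons_apex[OF ys(1) len graph_irrefl[OF G] graph_sym[OF G]] assms(4) ys(5)
    by blast
  moreover have "insert x (set ys) \<subseteq> V" using assms(2,3) ys(5) by blast
  ultimately have "is_hole V E (insert x (set ys))"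
    unfolding is_hole_iff_induced_cycle by (metis list.set(2))
  moreover have "p \<in> set ys" using ys(2,3) by auto
  ultimately show ?thesis using that ys(5) by blast
qed

lemma hole_through_vertex_and_outer_arc:
  assumes G: "graph V E" and cyc: "induced_cycle E hs" "set hs \<subseteq> V"
    and x: "x \<in> V" "x \<notin> set hs"
    and ab: "0 < a" "Suc a < b" "b < length hs" "E x (hs ! a)" "E x (hs ! b)"
    and outside: "\<And>j. j < length hs \<Longrightarrow> j < a \<or> b < j \<Longrightarrow> \<not> E x (hs ! j)"
  obtains C where "is_hole V E C" "x \<in> C" "C \<inter> set hs \<noteq> {}"
proof -
  let ?n = "length hs"
  define W where "W = {hs ! j | j. j < ?n \<and> (j \<le> a \<or> b \<le> j)}"
  have "W \<subseteq> V" "x \<notin> W" using cyc(2) x(2) unfolding W_def by (auto intro!: nth_mem)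
  have "hs ! b \<in> W" using ab(3) unfolding W_def by blast
  have "hs ! b \<noteq> hs ! a"
    using cyc(1) ab(2,3) unfolding induced_cycle_def by (simp add: nth_eq_iff_index_eq)
  have "\<not> E (hs ! b) (hs ! a)"
    using induced_cycle_adj[OF cyc(1), of b a] ab(1-3) by (auto simp: cyclic_adj_iff doubleton_eq_iff)
  have only_ab: "w = hs ! b \<or> w = hs ! a" if "w \<in> W" "E x w" for w
  proof -
    obtain j where j: "j < ?n" "j \<le> a \<or> b \<le> j" "w = hs ! j"
      using \<open>w \<in> W\<close> unfolding W_def by blast
    then have "\<not> (j < a \<or> b < j)" using outside[of j] \<open>E x w\<close> by blast
    with j(2) have "j = a \<or> j = b" by linarith
    then show ?thesis using j(3) by blast
  qed
  have "(induced_edge W E)\<^sup>*\<^sup>* (hs ! b) (hs ! a)"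
    unfolding W_def using outer_arc_reachable[OF cyc(1) _ ab(3), of a] ab(2) by simp
  then obtain C where "is_hole V E C" "x \<in> C" "hs ! b \<in> C"
    using hole_through_apex[OF G \<open>W \<subseteq> V\<close> x(1) \<open>x \<notin> W\<close> \<open>hs ! b \<in> W\<close> \<open>hs ! b \<noteq> hs ! a\<close>
        \<open>\<not> E (hs ! b) (hs ! a)\<close> ab(5,4) only_ab] by blast
  moreover have "hs ! b \<in> set hs" using ab(3) by simp
  ultimately show ?thesis using that by blast
qed

lemma hole_through_vertex_with_nonadjacent_neighbours:
  assumes G: "graph V E" and cyc: "induced_cycle E hs0" "set hs0 \<subseteq> V"
    and x: "x \<in> V" "x \<notin> set hs0"
    and yz: "y \<in> set hs0" "z \<in> set hs0" "E x y" "E x z" "y \<noteq> z" "\<not> E y z"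
    and c: "c \<in> set hs0" "\<not> E x c"
  obtains C where "is_hole V E C" "x \<in> C" "C \<inter> set hs0 \<noteq> {}"
proof -
  obtain hs where hs: "induced_cycle E hs" "set hs = set hs0" "hs ! 0 = c"
    using induced_cycle_rotate_to[OF cyc(1) c(1)] by blast
  let ?n = "length hs"
  define J where "J = {j. j < ?n \<and> E x (hs ! j)}"
  have "y \<in> set hs" "z \<in> set hs" using yz hs(2) by simp_all
  then obtain jy jz where jy: "jy \<in> J" "hs ! jy = y" and jz: "jz \<in> J" "hs ! jz = z"
    using yz(3,4) unfolding J_def by (auto simp: in_set_conv_nth)
  \<comment> \<open>with c at position 0, the outer arc between the extreme neighbours of x passes through c\<close>
  define a where "a = Min J"
  define b where "b = Max J"
  have "finite J" unfolding J_def by simp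
  then have J_bounds: "a \<le> j \<and> j \<le> b" if "j \<in> J" for j
    using that unfolding a_def b_def by simp
  have "a \<in> J" "b \<in> J" using \<open>finite J\<close> jy(1) unfolding a_def b_def by (auto intro: Min_in Max_in)
  then have ab: "a < ?n" "b < ?n" "E x (hs ! a)" "E x (hs ! b)" unfolding J_def by auto
  have "a \<noteq> 0" using ab(3) hs(3) c(2) by (auto intro: gr0I)
  have "jy \<noteq> jz" using jy jz yz(5) by auto
  then have "a < b" using J_bounds[OF jy(1)] J_bounds[OF jz(1)] by linarith
  have "b \<noteq> Suc a"
  proof
    assume "b = Suc a"
    then have "{jy, jz} = {a, Suc a}"
      using J_bounds[OF jy(1)] J_bounds[OF jz(1)] \<open>jy \<noteq> jz\<close> by (auto simp: le_Suc_eq)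
    then have "cyclic_adj ?n jy jz"
      using \<open>b = Suc a\<close> ab(2) by (auto simp: cyclic_adj_iff doubleton_eq_iff)
    then show False
      using induced_cycle_adj[OF hs(1)] jy jz yz(6) unfolding J_def by auto
  qed
  have outside: "\<not> E x (hs ! j)" if "j < ?n" "j < a \<or> b < j" for j
    using J_bounds[of j] that unfolding J_def by auto
  have "0 < a" "Suc a < b" using \<open>a \<noteq> 0\<close> \<open>a < b\<close> \<open>b \<noteq> Suc a\<close> by auto
  moreover have "set hs \<subseteq> V" "x \<notin> set hs" using hs(2) cyc(2) x(2) by auto
  ultimately obtain C where "is_hole V E C" "x \<in> C" "C \<inter> set hs \<noteq> {}"
    using hole_through_vertex_and_outer_arc[OF G hs(1) _ x(1) _ _ _ ab(2,3,4) outside] by blast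
  then show ?thesis using that hs(2) by simp
qed

lemma hole_through_path_vertex_and_bypass:
  assumes G: "graph V E" and path: "induced_path E ps" "set ps \<subseteq> V"
    and A: "A \<subseteq> V" "(induced_edge A E)\<^sup>*\<^sup>* (hd ps) (last ps)"
    and x: "x \<in> set ps" "x \<notin> A" "x \<noteq> hd ps" "x \<noteq> last ps"
    and A_nbrs: "\<And>w. w \<in> A \<Longrightarrow> E x w \<Longrightarrow> w = hd ps \<or> w = last ps"
  obtains C where "is_hole V E C" "x \<in> C" "C \<subseteq> set ps \<union> A"
proof -
  have sym: "\<And>a b. E a b \<Longrightarrow> E b a" using graph_sym[OF G] .
  have dist: "distinct ps" using path(1) unfolding induced_path_def by blast
  obtain i where i: "i < length ps" "ps ! i = x" using x(1) by (auto simp: in_set_conv_nth)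
  have "ps \<noteq> []" using x(1) by auto
  then have "hd ps = ps ! 0" "last ps = ps ! (length ps - 1)" by (simp_all add: hd_conv_nth last_conv_nth)
  then have "i \<noteq> 0" "i \<noteq> length ps - 1" using i(2) x(3,4) by metis+
  then have "0 < i" "Suc i < length ps" using i(1) by auto
  define W where "W = (set ps - {x}) \<union> A"
  have x_nbrs: "E x (ps ! t) \<longleftrightarrow> t = Suc i \<or> i = Suc t" if "t < length ps" for t
    using induced_path_adj[OF path(1) i(1) that] i(2) by simp
  have only_pq: "w = ps ! (i - 1) \<or> w = ps ! Suc i" if "w \<in> W" "E x w" for w
  proof -
    have "hd ps \<in> set ps" "last ps \<in> set ps" using \<open>ps \<noteq> []\<close> by simp_all
    then have "w \<in> set ps" using that A_nbrs[of w] unfolding W_def by auto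
    then obtain t where "t < length ps" "w = ps ! t" by (auto simp: in_set_conv_nth)
    then show ?thesis using x_nbrs \<open>E x w\<close> by auto
  qed
  have reach: "(induced_edge W E)\<^sup>*\<^sup>* (ps ! (i - 1)) (ps ! Suc i)"
    using induced_path_bypass_reachable[OF sym path(1) \<open>0 < i\<close> \<open>Suc i < length ps\<close> A(2)] i(2)
    unfolding W_def by simp
  have W: "W \<subseteq> V" "x \<notin> W" "ps ! (i - 1) \<in> W"
    using path(2) A(1) x(2) i \<open>0 < i\<close> nth_eq_iff_index_eq[OF dist] unfolding W_def
    by (auto intro: nth_mem)
  have pq: "ps ! (i - 1) \<noteq> ps ! Suc i" "\<not> E (ps ! (i - 1)) (ps ! Suc i)"
    using \<open>0 < i\<close> \<open>Suc i < length ps\<close> nth_eq_iff_index_eq[OF dist] induced_path_adj[OF path(1)]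
    by auto
  have x_pq: "E x (ps ! (i - 1))" "E x (ps ! Suc i)"
    using x_nbrs \<open>0 < i\<close> \<open>Suc i < length ps\<close> by auto
  have "x \<in> V" using path(2) x(1) by blast
  obtain C where "is_hole V E C" "x \<in> C" "C \<subseteq> insert x W"
    using hole_through_apex[OF G W(1) \<open>x \<in> V\<close> W(2,3) pq x_pq only_pq reach] by blast
  moreover have "insert x W \<subseteq> set ps \<union> A" using x(1) unfolding W_def by blast
  ultimately show ?thesis using that by blast
qed

lemma hole_through_path_vertex_with_clique_neighbourhood:
  assumes G: "graph V E" and cyc: "induced_cycle E hs0" "set hs0 \<subseteq> V"
    and path: "induced_path E ps" "set ps \<subseteq> V" "hd ps \<in> set hs0" "last ps \<in> set hs0"
    and x: "x \<in> set ps" "x \<notin> set hs0"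
    and clique: "\<And>y z. y \<in> set hs0 \<Longrightarrow> z \<in> set hs0 \<Longrightarrow> E x y \<Longrightarrow> E x z \<Longrightarrow> y \<noteq> z \<Longrightarrow> E y z"
  obtains C where "is_hole V E C" "x \<in> C" "C \<inter> set hs0 \<noteq> {}"
proof -
  have "\<And>y z. y \<in> {w \<in> set hs0. E x w} \<Longrightarrow> z \<in> {w \<in> set hs0. E x w} \<Longrightarrow> y \<noteq> z \<Longrightarrow> E y z"
    using clique by blast
  then obtain A where A: "A \<subseteq> set hs0" "(induced_edge A E)\<^sup>*\<^sup>* (hd ps) (last ps)"
      "A \<inter> {w \<in> set hs0. E x w} \<subseteq> {hd ps, last ps}"
    using induced_cycle_arc_avoiding_clique[OF cyc(1) graph_sym[OF G] path(3,4)] by blast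
  have x_A: "A \<subseteq> V" "x \<notin> A" "x \<noteq> hd ps" "x \<noteq> last ps"
    using A(1) cyc(2) path(3,4) x(2) by auto
  have A_nbrs: "w = hd ps \<or> w = last ps" if "w \<in> A" "E x w" for w
    using that A(1,3) by blast
  obtain C where C: "is_hole V E C" "x \<in> C" "C \<subseteq> set ps \<union> A"
    using hole_through_path_vertex_and_bypass[OF G path(1,2) x_A(1) A(2) x(1) x_A(2-4) A_nbrs] .
  have "C \<inter> set hs0 \<noteq> {}"
  proof
    assume "C \<inter> set hs0 = {}"
    then have "C \<subseteq> set ps" using C(3) A(1) by blast
    then show False using induced_path_contains_no_hole[OF path(1) C(1)] by blast
  qed
  with C(1,2) show ?thesis using that by blast
qed

lemma hole_through_inner_path_vertex:
  assumes G: "graph V E" and cyc: "induced_cycle E hs0" "set hs0 \<subseteq> V"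
    and path: "induced_path E ps" "set ps \<subseteq> V" "4 \<le> length ps"
      "hd ps \<in> set hs0" "last ps \<in> set hs0"
    and x: "x \<in> set ps" "x \<notin> set hs0"
  obtains C where "is_hole V E C" "x \<in> C" "C \<inter> set hs0 \<noteq> {}"
proof (cases "\<forall>y z. y \<in> set hs0 \<longrightarrow> z \<in> set hs0 \<longrightarrow> E x y \<longrightarrow> E x z \<longrightarrow> y \<noteq> z \<longrightarrow> E y z")
  case True
  then show ?thesis
    using hole_through_path_vertex_with_clique_neighbourhood[OF G cyc path(1,2,4,5) x] that by blast
next
  case False
  then obtain y z where yz: "y \<in> set hs0" "z \<in> set hs0" "E x y" "E x z" "y \<noteq> z" "\<not> E y z"
    by blast
  have "\<not> (E x (hd ps) \<and> E x (last ps))"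
  proof
    assume "E x (hd ps) \<and> E x (last ps)"
    moreover obtain i where i: "i < length ps" "ps ! i = x" using x(1) by (auto simp: in_set_conv_nth)
    moreover have "ps \<noteq> []" using path(3) by auto
    then have "hd ps = ps ! 0" "last ps = ps ! (length ps - 1)"
      by (simp_all add: hd_conv_nth last_conv_nth)
    ultimately have "i = 1" "length ps - 1 = Suc i"
      using \<open>ps \<noteq> []\<close> induced_path_adj[OF path(1), of i 0] induced_path_adj[OF path(1), of i "length ps - 1"]
      by auto
    then show False using path(3) by simp
  qed
  then obtain c where "c \<in> set hs0" "\<not> E x c" using path(4,5) by blast
  then show ?thesis
    using hole_through_vertex_with_nonadjacent_neighbours[OF G cyc _ x(2) yz] path(2) x(1) that
    by blast
qed

section \<open>Adding an edge\<close>

lemma add_edge_new_hole_contains_ends: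
  assumes "is_hole V (add_edge E u v) C" "\<not> is_hole V E C"
  shows "u \<in> C" "v \<in> C"
proof -
  obtain xs where "C \<subseteq> V" "induced_cycle (add_edge E u v) xs" "set xs = C"
    using assms(1) unfolding is_hole_iff_induced_cycle by blast
  moreover have "add_edge E u v a b = E a b" if "\<not> (u \<in> C \<and> v \<in> C)" "a \<in> C" "b \<in> C" for a b
    using that unfolding add_edge_def by blast
  ultimately have "u \<in> C \<and> v \<in> C"
    using assms(2) induced_cycle_cong[of xs "add_edge E u v" E] unfolding is_hole_iff_induced_cycle
    by blast
  then show "u \<in> C" "v \<in> C" by simp_all
qed

lemma induced_path_of_induced_cycle_add_edge:
  assumes cyc: "induced_cycle (add_edge E u v) xs" and "u \<in> set xs" "v \<in> set xs"
    and "\<not> E u v" and sym: "\<And>a b. E a b \<Longrightarrow> E b a"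
  obtains ps where "induced_path E ps" "set ps = set xs" "length ps = length xs"
    "{hd ps, last ps} = {u, v}"
proof -
  let ?n = "length xs"
  obtain a b where ab: "a < ?n" "xs ! a = u" "b < ?n" "xs ! b = v"
    using assms(2,3) by (auto simp: in_set_conv_nth)
  have "add_edge E u v u v" unfolding add_edge_def by simp
  then have "b = Suc a mod ?n \<or> a = Suc b mod ?n"
    using induced_cycle_adj[OF cyc ab(1,3)] ab unfolding cyclic_adj_def by simp
  then obtain s where s: "s < ?n" "{hd (rotate (Suc s) xs), last (rotate (Suc s) xs)} = {u, v}"
  proof (elim disjE)
    assume "b = Suc a mod ?n"
    then show ?thesis using that[of a] hd_last_rotate_Suc[OF ab(1)] ab by (simp add: insert_commute)
  next
    assume "a = Suc b mod ?n"
    then show ?thesis using that[of b] hd_last_rotate_Suc[OF ab(3)] ab by simp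
  qed
  have E_iff: "E a' b' \<longleftrightarrow> add_edge E u v a' b' \<and> {a', b'} \<noteq> {u, v}" for a' b'
    using \<open>\<not> E u v\<close> sym unfolding add_edge_def by (auto simp: doubleton_eq_iff)
  have "induced_path E (rotate (Suc s) xs)"
    by (rule induced_path_of_cycle_minus_closing_edge[OF induced_cycle_rotate[OF cyc]])
      (simp only: s(2) E_iff)
  with s(2) show ?thesis using that by simp
qed

lemma induced_path_of_new_hole:
  assumes G: "graph V E" and "\<not> E u v"
    and new: "is_hole V (add_edge E u v) C" "\<not> is_hole V E C"
  obtains ps where "induced_path E ps" "set ps = C" "4 \<le> length ps" "{hd ps, last ps} = {u, v}"
proof -
  obtain xs where xs: "induced_cycle (add_edge E u v) xs" "set xs = C"
    using new(1) unfolding is_hole_iff_induced_cycle by blast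
  have "u \<in> set xs" "v \<in> set xs" using add_edge_new_hole_contains_ends[OF new] xs(2) by simp_all
  then obtain ps where ps: "induced_path E ps" "set ps = set xs" "length ps = length xs"
      "{hd ps, last ps} = {u, v}"
    using induced_path_of_induced_cycle_add_edge[OF xs(1) _ _ \<open>\<not> E u v\<close> graph_sym[OF G]] by blast
  have "4 \<le> length xs" using xs(1) unfolding induced_cycle_def by blast
  with ps xs(2) show ?thesis using that[of ps] by simp
qed

lemma hole_class_memberI:
  assumes "H \<in> holes V E" "is_hole V E C" "x \<in> C" "C \<inter> H \<noteq> {}"
  shows "x \<in> hole_class V E H"
proof (cases "C = H")
  case True
  then have "hole_rel V E x x"
    unfolding hole_rel_def using assms(1,3) by (intro exI[of _ "[H]"]) auto
  with True assms(3) show ?thesis unfolding hole_class_def by blast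
next
  case False
  obtain h where "h \<in> C" "h \<in> H" using assms(4) by blast
  have "hole_rel V E h x"
    unfolding hole_rel_def
  proof (intro exI[of _ "[H, C]"] conjI)
    show "set [H, C] \<subseteq> holes V E" using assms(1,2) unfolding holes_def by simp
    show "\<forall>i. Suc i < length [H, C] \<longrightarrow> [H, C] ! i \<inter> [H, C] ! Suc i \<noteq> {}"
      using assms(4) by (simp add: Int_commute)
  qed (use False \<open>h \<in> H\<close> assms(3) in auto)
  with \<open>h \<in> H\<close> show ?thesis unfolding hole_class_def by blast
qed

theorem proposition4p6:
  fixes V :: "'a set" and E :: "'a \<Rightarrow> 'a \<Rightarrow> bool" and H Hs :: "'a set" and u v :: 'a
  assumes "graph V E"
    and "\<not> chordal V E"
    and "H \<in> holes V E"
    and "u \<in> H" and "v \<in> H" and "u \<noteq> v" and "\<not> E u v"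
    and "Hs \<in> holes V (add_edge E u v)"
    and "Hs \<notin> holes V E"
  shows "Hs \<subseteq> hole_class V E H"
proof
  fix x assume "x \<in> Hs"
  have "is_hole V E H" and new: "is_hole V (add_edge E u v) Hs" "\<not> is_hole V E Hs"
    using assms(3,8,9) unfolding holes_def by simp_all
  then obtain hs0 where hs0: "induced_cycle E hs0" "set hs0 = H" "H \<subseteq> V"
    unfolding is_hole_iff_induced_cycle by blast
  obtain ps where ps: "induced_path E ps" "set ps = Hs" "4 \<le> length ps" "{hd ps, last ps} = {u, v}"
    using induced_path_of_new_hole[OF assms(1,7) new] by blast
  have "hd ps \<in> {u, v}" "last ps \<in> {u, v}" unfolding ps(4)[symmetric] by simp_all
  then have ends: "hd ps \<in> set hs0" "last ps \<in> set hs0" using assms(4,5) hs0(2) by auto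
  have "set ps \<subseteq> V" using new(1) ps(2) unfolding is_hole_def by blast
  show "x \<in> hole_class V E H"
  proof (cases "x \<in> H")
    case True
    then have "H \<inter> H \<noteq> {}" by blast
    with True show ?thesis by (rule hole_class_memberI[OF assms(3) \<open>is_hole V E H\<close>])
  next
    case False
    obtain C where "is_hole V E C" "x \<in> C" "C \<inter> H \<noteq> {}"
      using hole_through_inner_path_vertex[OF assms(1) hs0(1) _ ps(1) \<open>set ps \<subseteq> V\<close> ps(3) ends]
        hs0(2,3) ps(2) \<open>x \<in> Hs\<close> False by blast
    then show ?thesis by (rule hole_class_memberI[OF assms(3)])
  qed
qed

end
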